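(* Let $\kappa$ be a finite field of characteristic $p \neq 2$, let $\chi$ be the quadratic character of $\kappa^\times$, and let $\mu$ be the Möbius function on non-zero elements of $\kappa[u]$. Let $a, b \in \kappa^\times$ and let $g_1, g_2 \in \kappa[u]$ be relatively prime (not both zero), using the convention $\deg 0 = -\infty$. Then $$\mu(a g_1^{2p} + b u g_2^{2p}) = \begin{cases} -\chi(-1)^{\deg g_2} & \text{if } \deg g_1 \le \deg g_2,\\ \chi(-1)^{\deg g_1} & \text{if } \deg g_1 > \deg g_2.\end{cases}$$
   Context: For non-zero $P \in \kappa[u]$, $\mu(P) = 0$ if $P$ is divisible by the square of a non-constant polynomial, and otherwise $\mu(P) = (-1)^r$ where $r$ is the number of (monic) irreducible factors of $P$; $\mu$ of a non-zero constant is $1$. *)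

theory Defs
  imports "HOL-Computational_Algebra.Computational_Algebra"
begin

definition quad_char :: "'a::field \<Rightarrow> int" where
  "quad_char x = (if x = 0 then 0 else if (\<exists>y. y ^ 2 = x) then 1 else -1)"

definition poly_mobius :: "'a::field_gcd poly \<Rightarrow> int" where
  "poly_mobius P = (if squarefree P then (-1) ^ card (prime_factors P) else 0)"

end

(*
  Write F = a g1^(2p) + b u g2^(2p), n = deg F, q = |k| and h = (q - 1)/2.  As p kills the
  derivative of a p-th power, F' = b (g2^p)^2, and coprimality of g1 and g2 then makes all roots
  of F in an algebraic closure simple.  So F is squarefree and mu(F) = (-1)^r, where r is the
  number of irreducible factors of F.

  Stickelberger: disc(F)^h = (-1)^(n - r).  The Frobenius x -> x^q permutes the roots, as a
  d-cycle on the roots of each irreducible factor of degree d, so it multiplies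
  delta = prod_{i<j} (x_i - x_j) by the sign (-1)^(n - r); hence delta^(q - 1) = (-1)^(n - r).

  Since the discriminant is (-1)^(n choose 2) lc(F)^(-n) times the product of F' over the roots,
  disc(F) = (-1)^(n choose 2) (b / lc F)^n P^2 with P = prod_{F(x) = 0} g2(x)^p nonzero and in k.
  Euler's criterion turns Stickelberger's theorem into (-1)^(n + r) = chi(b / lc F)^n
  chi(-1)^(n choose 2).  If deg g1 <= deg g2 then n = 2p deg g2 + 1 and b / lc F is a square;
  otherwise n = 2p deg g1 is even.  In both cases (n choose 2) has the parity of that degree.
*)

theory Submission
  imports Defs "Subresultants.More_Homomorphisms" "HOL-Algebra.Algebraic_Closure_Type"
    "HOL-Number_Theory.Cong" "HOL-Library.Cardinality"
begin

hide_const (open) up_ring.coeff up_ring.monom Polynomials.degree Polynomials.lead_coeff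
  Divisibility.prime Divisibility.irreducible Module.module.smult

section \<open>Finite fields\<close>

lemma card_finite_field_ge_2: "2 \<le> CARD('a::finite_field)"
proof -
  have "card {0, 1 :: 'a} \<le> CARD('a)" by (intro card_mono) auto
  then show ?thesis by simp
qed

lemma power_card_minus_one:
  fixes x :: "'a::finite_field"
  assumes "x \<noteq> 0"
  shows "x ^ (CARD('a) - 1) = 1"
proof -
  have "x ^ (CARD('a) - 1) * x = x ^ CARD('a)"
    using card_finite_field_ge_2[where ?'a = 'a] by (simp flip: power_Suc2)
  also have "\<dots> = x" by (rule finite_field_power_card_eq_same)
  finally show ?thesis using assms by simp
qed

lemma of_nat_mod_CHAR: "(of_nat (k mod CHAR('a)) :: 'a::semiring_1_cancel) = of_nat k"
  by (simp add: of_nat_eq_iff_cong_CHAR cong_def)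

lemma of_nat_CHAR_minus_one: "(of_nat (CHAR('a) - 1) :: 'a::field_prime_char) = -1"
proof -
  have "Suc (CHAR('a) - 1) = CHAR('a)" by simp
  then have "(of_nat (CHAR('a) - 1) :: 'a) + 1 = 0"
    by (metis of_nat_CHAR of_nat_Suc add.commute)
  then show ?thesis by (simp add: eq_neg_iff_add_eq_0)
qed

fun prime_span :: "'a::field list \<Rightarrow> 'a set" where
  "prime_span [] = {0}"
| "prime_span (x # xs) = (\<lambda>(k, y). of_nat k * x + y) ` ({..<CHAR('a)} \<times> prime_span xs)"

lemma zero_in_prime_span: "(0 :: 'a::field_prime_char) \<in> prime_span xs"
  by (induction xs) (auto intro!: image_eqI[of _ _ "(0, 0)"])

lemma prime_span_linear:
  fixes y z :: "'a::field_prime_char"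
  assumes "y \<in> prime_span xs" "z \<in> prime_span xs"
  shows "of_nat j * y + z \<in> prime_span xs"
  using assms
proof (induction xs arbitrary: y z)
  case (Cons x xs)
  from Cons.prems obtain k y' k' z' where
    y: "y' \<in> prime_span xs" "y = of_nat k * x + y'" and
    z: "z' \<in> prime_span xs" "z = of_nat k' * x + z'"
    by auto
  have "of_nat j * y + z = of_nat ((j * k + k') mod CHAR('a)) * x + (of_nat j * y' + z')"
    by (simp add: y z of_nat_mod_CHAR algebra_simps)
  moreover have "of_nat j * y' + z' \<in> prime_span xs" using Cons.IH y z by blast
  ultimately show ?case by (auto intro!: image_eqI[of _ _ "((j * k + k') mod CHAR('a), _)"])
qed simp

lemma in_prime_span: "x \<in> set xs \<Longrightarrow> x \<in> prime_span (xs :: 'a::field_prime_char list)"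
proof (induction xs)
  case (Cons a xs)
  show ?case
  proof (cases "x = a")
    case True
    have "1 < CHAR('a)" using prime_gt_1_nat[OF CHAR_prime] .
    then show ?thesis using True zero_in_prime_span[of xs] by (auto intro!: image_eqI[of _ _ "(1, 0)"])
  next
    case False
    then show ?thesis using Cons by (auto intro!: image_eqI[of _ _ "(0, x)"])
  qed
qed simp

lemma prime_span_Cons_eq:
  assumes "x \<in> prime_span xs"
  shows "prime_span (x # xs) = prime_span (xs :: 'a::field_prime_char list)"
  using assms by (auto intro!: prime_span_linear image_eqI[of _ _ "(0, _)"])

lemma prime_span_cancel:
  fixes x :: "'a::finite_field"
  assumes "0 < j" "j < CHAR('a)" "of_nat j * x \<in> prime_span xs"
  shows "x \<in> prime_span xs"
proof -
  have "(of_nat j :: 'a) \<noteq> 0" using assms(1,2) by (auto simp: of_nat_eq_0_iff_char_dvd dest: dvd_imp_le)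
  \<comment> \<open>so the inverse of \<open>of_nat j\<close> is \<open>of_nat (j ^ (q - 2))\<close>, again in the prime field\<close>
  then have "(of_nat j :: 'a) ^ (CARD('a) - 2) * of_nat j = 1"
    using power_card_minus_one[of "of_nat j :: 'a"] card_finite_field_ge_2[where ?'a = 'a]
    by (simp flip: power_Suc2 add: Suc_diff_Suc numeral_2_eq_2)
  then have "of_nat (j ^ (CARD('a) - 2)) * (of_nat j * x) + 0 = x"
    by (simp add: mult.assoc[symmetric])
  then show ?thesis using prime_span_linear[OF assms(3) zero_in_prime_span] by metis
qed

lemma card_prime_span: "\<exists>m. card (prime_span (xs :: 'a::finite_field list)) = CHAR('a) ^ m"
proof (induction xs)
  case (Cons x xs)
  then obtain m where m: "card (prime_span xs) = CHAR('a) ^ m" by blast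
  show ?case
  proof (cases "x \<in> prime_span xs")
    case True
    then show ?thesis using m by (simp only: prime_span_Cons_eq) blast
  next
    case False
    have no_collision: False
      if "k' < k" "k < CHAR('a)" "y \<in> prime_span xs" "y' \<in> prime_span xs"
        "of_nat k * x + y = of_nat k' * x + y'" for k k' y y'
    proof -
      have "of_nat (k - k') * x = of_nat (CHAR('a) - 1) * y + y'"
        unfolding of_nat_CHAR_minus_one using that(1,5) by (simp add: of_nat_diff algebra_simps)
      then have "of_nat (k - k') * x \<in> prime_span xs"
        using prime_span_linear[OF that(3,4)] by simp
      then show False using prime_span_cancel[of "k - k'" x xs] that(1,2) False by linarith
    qed
    have "inj_on (\<lambda>(k, y). of_nat k * x + y) ({..<CHAR('a)} \<times> prime_span xs)"
    proof (rule inj_onI, clarify)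
      fix k y k' y'
      assume "k < CHAR('a)" "k' < CHAR('a)" "y \<in> prime_span xs" "y' \<in> prime_span xs"
        and eq: "of_nat k * x + y = of_nat k' * x + y'"
      then have "k = k'" using no_collision[of k' k y y'] no_collision[of k k' y' y]
        by (metis linorder_neqE_nat)
      then show "k = k' \<and> y = y'" using eq by simp
    qed
    then have "card (prime_span (x # xs)) = CHAR('a) * card (prime_span xs)"
      by (simp add: card_image card_cartesian_product)
    then show ?thesis using m by (intro exI[of _ "Suc m"]) simp
  qed
qed (intro exI[of _ 0], simp)

lemma card_finite_field_CHAR_power: "\<exists>m. CARD('a::finite_field) = CHAR('a) ^ m"
proof -
  obtain xs :: "'a list" where "set xs = UNIV" using finite_list[of "UNIV :: 'a set"] by auto
  then have "prime_span xs = UNIV" using in_prime_span[of _ xs] by auto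
  then show ?thesis using card_prime_span[of xs] by metis
qed

lemma odd_CHAR: "CHAR('a::field_prime_char) \<noteq> 2 \<Longrightarrow> odd CHAR('a)"
  using prime_ge_2_nat[OF CHAR_prime[where ?'a = 'a]] prime_odd_nat[OF CHAR_prime[where ?'a = 'a]]
  by (cases "CHAR('a) = 2") auto

lemma odd_card_finite_field: "CHAR('a::finite_field) \<noteq> 2 \<Longrightarrow> odd CARD('a)"
  using card_finite_field_CHAR_power[where ?'a = 'a] odd_CHAR[where ?'a = 'a] by auto

lemma double_half_card_minus_one:
  "odd CARD('a::finite_field) \<Longrightarrow> 2 * ((CARD('a) - 1) div 2) = CARD('a) - 1"
  by presburger

section \<open>The Frobenius $x \<mapsto> x^q$ on the algebraic closure\<close>

interpretation to_ac_hom: field_hom "to_ac :: 'a::field \<Rightarrow> 'a alg_closure"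
  by unfold_locales auto

interpretation to_ac_poly_hom: map_poly_idom_hom "to_ac :: 'a::field \<Rightarrow> 'a alg_closure"
  by unfold_locales auto

lemma frobenius_add:
  "(x + y :: 'a::finite_field alg_closure) ^ CARD('a) = x ^ CARD('a) + y ^ CARD('a)"
proof -
  obtain m where "CARD('a) = CHAR('a) ^ m" using card_finite_field_CHAR_power by blast
  then show ?thesis by (intro freshmans_dream') simp_all
qed

interpretation frob: map_poly_idom_hom "\<lambda>x::'a::finite_field alg_closure. x ^ CARD('a)"
  by unfold_locales (simp_all add: frobenius_add power_mult_distrib)

lemma frobenius_eq_iff:
  fixes x y :: "'a::finite_field alg_closure"
  shows "x ^ CARD('a) = y ^ CARD('a) \<longleftrightarrow> x = y"
proof
  assume "x ^ CARD('a) = y ^ CARD('a)"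
  then have "(x - y) ^ CARD('a) = 0" by (simp add: frob.base.hom_minus)
  then show "x = y" by simp
qed simp

lemma frobenius_iter_eq_iff:
  fixes x y :: "'a::finite_field alg_closure"
  shows "x ^ (CARD('a) ^ i) = y ^ (CARD('a) ^ i) \<longleftrightarrow> x = y"
  by (induction i arbitrary: x y) (simp_all add: power_mult frobenius_eq_iff flip: power_Suc2)

lemma to_ac_power_card: "to_ac (x :: 'a::finite_field) ^ CARD('a) = to_ac x"
  by (simp flip: to_ac_power add: finite_field_power_card_eq_same)

lemma poly_to_ac_power_card:
  fixes p :: "'a::finite_field poly"
  shows "poly (map_poly to_ac p) (x ^ CARD('a)) = poly (map_poly to_ac p) x ^ CARD('a)"
proof -
  have "map_poly (\<lambda>x. x ^ CARD('a)) (map_poly to_ac p) = map_poly to_ac p"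
    by (rule poly_eqI) (simp add: coeff_map_poly to_ac_power_card)
  then show ?thesis using frob.base.poly_map_poly[of "map_poly to_ac p" x] by simp
qed

text \<open>The fixed points of the Frobenius are the roots of $X^q - X$; the $q$ elements of the
  base field already exhaust them.\<close>

lemma frobenius_fixed_imp_in_range:
  fixes y :: "'a::finite_field alg_closure"
  assumes "y ^ CARD('a) = y"
  shows "y \<in> range to_ac"
proof -
  define P :: "'a alg_closure poly" where "P = monom 1 CARD('a) + [:0, -1:]"
  have q2: "2 \<le> CARD('a)" by (rule card_finite_field_ge_2)
  have poly_P: "poly P z = z ^ CARD('a) - z" for z by (simp add: P_def poly_monom)
  have "degree P = CARD('a)" using q2 unfolding P_def by (subst degree_add_eq_left) (auto simp: degree_monom_eq)
  then have "P \<noteq> 0" using q2 by auto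
  define R where "R = {z. poly P z = 0}"
  have "finite R" unfolding R_def using \<open>P \<noteq> 0\<close> by (rule poly_roots_finite)
  moreover have "card R \<le> CARD('a)"
    unfolding R_def using card_poly_roots_bound[OF \<open>P \<noteq> 0\<close>] \<open>degree P = CARD('a)\<close> by simp
  moreover have "range to_ac \<subseteq> R" by (auto simp: R_def poly_P to_ac_power_card)
  moreover have "card (range (to_ac :: 'a \<Rightarrow> _)) = CARD('a)" by (simp add: card_image inj_to_ac)
  ultimately have "range to_ac = R" using card_mono[of R "range to_ac"] by (intro card_subset_eq) auto
  then show ?thesis using assms by (simp add: R_def poly_P)
qed

lemma frobenius_fixed_power_card_minus_one:
  fixes y :: "'a::finite_field alg_closure"
  assumes "y ^ CARD('a) = y" "y \<noteq> 0"
  shows "y ^ (CARD('a) - 1) = 1"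
proof -
  obtain z where "y = to_ac z" using frobenius_fixed_imp_in_range[OF assms(1)] by blast
  then show ?thesis using assms(2) power_card_minus_one[of z] by (simp flip: to_ac_power)
qed

theorem euler_criterion:
  fixes x :: "'a::finite_field"
  assumes "CHAR('a) \<noteq> 2" "x \<noteq> 0"
  shows "x ^ ((CARD('a) - 1) div 2) = of_int (quad_char x)"
proof -
  define h where "h = (CARD('a) - 1) div 2"
  have two_h: "2 * h = CARD('a) - 1"
    unfolding h_def using odd_card_finite_field[OF assms(1)] by (rule double_half_card_minus_one)
  obtain z :: "'a alg_closure" where z: "z ^ 2 = to_ac x" using nth_root_exists[of 2 "to_ac x"] by auto
  have x_h: "to_ac (x ^ h) = z ^ (CARD('a) - 1)"
    unfolding two_h[symmetric] power_mult using z by simp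
  show ?thesis
  proof (cases "\<exists>y. y ^ 2 = x")
    case True
    then obtain y where y: "y ^ 2 = x" by blast
    then have "x ^ h = y ^ (CARD('a) - 1)" unfolding two_h[symmetric] power_mult by simp
    then show ?thesis using True assms y power_card_minus_one[of y] by (auto simp: quad_char_def h_def)
  next
    case False
    have "z \<notin> range to_ac"
    proof
      assume "z \<in> range to_ac"
      then obtain w where "z = to_ac w" by auto
      then have "w ^ 2 = x" using z by (simp flip: to_ac_power)
      then show False using False by blast
    qed
    then have "z ^ CARD('a) \<noteq> z" using frobenius_fixed_imp_in_range by blast
    moreover have "z ^ CARD('a) = z ^ (CARD('a) - 1) * z"
      using card_finite_field_ge_2[where ?'a = 'a] by (simp flip: power_Suc2)
    ultimately have "z ^ (CARD('a) - 1) \<noteq> 1" by auto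
    then have "x ^ h \<noteq> 1" using x_h by (metis to_ac_1)
    moreover have "(x ^ h) ^ 2 = x ^ (CARD('a) - 1)"
      unfolding two_h[symmetric] by (simp only: power_mult[symmetric] mult.commute)
    then have "(x ^ h) ^ 2 = 1" using power_card_minus_one[OF assms(2)] by simp
    ultimately have "x ^ h = -1" by (simp add: power2_eq_1_iff)
    then show ?thesis using False assms by (simp add: quad_char_def h_def)
  qed
qed

section \<open>Polynomials with simple roots\<close>

definition simple_roots :: "'a::field poly \<Rightarrow> bool" where
  "simple_roots F \<longleftrightarrow> (\<forall>x. poly F x = 0 \<longrightarrow> poly (pderiv F) x \<noteq> 0)"

lemma simple_roots_nonzero: "simple_roots F \<Longrightarrow> F \<noteq> 0"
  by (auto simp: simple_roots_def)

lemma simple_roots_dvd: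
  assumes "simple_roots F" "H dvd F"
  shows "simple_roots H"
  unfolding simple_roots_def
proof (intro allI impI)
  fix x assume Hx: "poly H x = 0"
  from assms(2) obtain W where F: "F = H * W" by (elim dvdE)
  have "poly (pderiv F) x \<noteq> 0" using assms(1) Hx by (simp add: simple_roots_def F)
  then show "poly (pderiv H) x \<noteq> 0" using Hx by (simp add: F pderiv_mult)
qed

lemma simple_roots_square_dvd:
  assumes "simple_roots F" "H * H dvd F"
  shows "poly H x \<noteq> 0"
proof
  assume Hx: "poly H x = 0"
  from assms(2) obtain W where F: "F = H * H * W" by (elim dvdE)
  have "poly (pderiv F) x \<noteq> 0" using assms(1) Hx by (simp add: simple_roots_def F)
  then show False using Hx by (simp add: F pderiv_mult)
qed

lemma simple_roots_split:
  fixes F :: "'a::alg_closed_field poly"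
  assumes "simple_roots F"
  shows "F = smult (lead_coeff F) (\<Prod>x | poly F x = 0. [:-x, 1:]) \<and> card {x. poly F x = 0} = degree F"
  using assms
proof (induction "degree F" arbitrary: F rule: less_induct)
  case (less F)
  have "F \<noteq> 0" using less.prems by (rule simple_roots_nonzero)
  show ?case
  proof (cases "degree F = 0")
    case True
    then obtain c where "F = [:c:]" by (elim degree_eq_zeroE)
    then show ?thesis using True \<open>F \<noteq> 0\<close> by simp
  next
    case False
    then obtain x where x: "poly F x = 0" using alg_closed_imp_poly_has_root by blast
    then obtain W where F: "F = [:-x, 1:] * W" using poly_eq_0_iff_dvd by (metis dvdE)
    define R where "R = {y. poly W y = 0}"
    have "W \<noteq> 0" using \<open>F \<noteq> 0\<close> F by auto
    then have deg: "degree F = Suc (degree W)" unfolding F by (subst degree_mult_eq) auto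
    have "W dvd F" unfolding F by (rule dvd_triv_right)
    then have "simple_roots W" using less.prems simple_roots_dvd by blast
    then have IH: "W = smult (lead_coeff W) (\<Prod>y\<in>R. [:-y, 1:])" "card R = degree W"
      using less.hyps[of W] deg by (simp_all add: R_def)
    have "poly (pderiv F) x = poly W x" unfolding F pderiv_mult by (simp add: pderiv_pCons)
    then have "x \<notin> R" using less.prems x by (auto simp: simple_roots_def R_def)
    have "finite R" unfolding R_def using \<open>W \<noteq> 0\<close> by (rule poly_roots_finite)
    have roots: "{x. poly F x = 0} = insert x R" by (auto simp: F R_def)
    have "lead_coeff F = lead_coeff W" by (simp only: F lead_coeff_mult) simp
    then have "[:-x, 1:] * smult (lead_coeff W) (\<Prod>y\<in>R. [:-y, 1:])
        = smult (lead_coeff F) (\<Prod>y\<in>insert x R. [:-y, 1:])"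
      by (simp only: prod.insert[OF \<open>finite R\<close> \<open>x \<notin> R\<close>] mult_smult_right)
    then have "F = smult (lead_coeff F) (\<Prod>y\<in>insert x R. [:-y, 1:])" using F IH(1) by metis
    then show ?thesis
      using IH(2) deg roots \<open>finite R\<close> \<open>x \<notin> R\<close> by simp
  qed
qed

lemma prod_pderiv_roots:
  fixes F :: "'a::alg_closed_field poly"
  assumes "simple_roots F"
  defines "S \<equiv> {x. poly F x = 0}"
  shows "(\<Prod>x\<in>S. poly (pderiv F) x) = lead_coeff F ^ degree F * (\<Prod>x\<in>S. \<Prod>y\<in>S - {x}. x - y)"
proof -
  have F: "F = smult (lead_coeff F) (\<Prod>x\<in>S. [:-x, 1:])" and card: "card S = degree F"
    using simple_roots_split[OF assms(1)] by (simp_all add: S_def)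
  have "finite S" unfolding S_def using simple_roots_nonzero[OF assms(1)] by (rule poly_roots_finite)
  have "poly (pderiv F) x = lead_coeff F * (\<Prod>y\<in>S - {x}. x - y)" if "x \<in> S" for x
  proof -
    define W where "W = (\<Prod>y\<in>S - {x}. [:-y, 1:])"
    have "(\<Prod>y\<in>S. [:-y, 1:]) = [:-x, 1:] * W"
      unfolding W_def using \<open>finite S\<close> that by (rule prod.remove)
    then have "pderiv F = smult (lead_coeff F) (pderiv ([:-x, 1:] * W))"
      by (subst F) (simp only: pderiv_smult)
    moreover have "poly (pderiv ([:-x, 1:] * W)) x = poly W x"
      unfolding pderiv_mult by (simp add: pderiv_pCons)
    ultimately show ?thesis by (simp add: W_def poly_prod)
  qed
  then have "(\<Prod>x\<in>S. poly (pderiv F) x) = (\<Prod>x\<in>S. lead_coeff F * (\<Prod>y\<in>S - {x}. x - y))"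
    by (rule prod.cong[OF refl])
  then show ?thesis by (simp add: prod.distrib card)
qed

definition ac_roots :: "'a::field poly \<Rightarrow> 'a alg_closure set" where
  "ac_roots f = {x. poly (map_poly to_ac f) x = 0}"

lemma degree_map_poly_to_ac [simp]: "degree (map_poly to_ac p) = degree p"
  by (rule degree_map_poly) simp

lemma finite_ac_roots: "f \<noteq> 0 \<Longrightarrow> finite (ac_roots f)"
  unfolding ac_roots_def by (rule poly_roots_finite) simp

lemma simple_roots_imp_squarefree:
  fixes f :: "'a::field_gcd poly"
  assumes "simple_roots (map_poly to_ac f)"
  shows "squarefree f"
  unfolding squarefree_def
proof (intro allI impI)
  fix h assume "h ^ 2 dvd f"
  then have "map_poly to_ac h * map_poly to_ac h dvd map_poly to_ac f"
    by (metis power2_eq_square to_ac_poly_hom.hom_dvd to_ac_poly_hom.hom_mult)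
  then have "poly (map_poly to_ac h) x \<noteq> 0" for x using assms simple_roots_square_dvd by blast
  then have "degree (map_poly to_ac h) = 0" using alg_closed_imp_poly_has_root by blast
  moreover have "h \<noteq> 0" using \<open>h ^ 2 dvd f\<close> simple_roots_nonzero[OF assms] by auto
  ultimately show "is_unit h" by (simp add: is_unit_iff_degree)
qed

section \<open>Discriminants of finite sets\<close>

text \<open>The discriminant of $\prod_{x \<in> S} (X - x)$: for any enumeration $x_1, \ldots, x_n$
  of \<open>S\<close> it equals $\prod_{i<j} (x_i - x_j)^2$ (lemma \<open>disc_set_image\<close>).\<close>

definition disc_set :: "'a::comm_ring_1 set \<Rightarrow> 'a" where
  "disc_set S = (-1) ^ (card S choose 2) * (\<Prod>x\<in>S. \<Prod>y\<in>S - {x}. x - y)"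

lemma choose_two_add: "(m + n) choose 2 = (m choose 2) + (n choose 2) + m * n"
  by (induction n) (simp_all add: numeral_2_eq_2)

lemma prod_prod_diff_swap:
  fixes S T :: "'a::comm_ring_1 set"
  shows "(\<Prod>x\<in>T. \<Prod>y\<in>S. x - y) = (-1) ^ (card S * card T) * (\<Prod>x\<in>S. \<Prod>y\<in>T. x - y)"
proof -
  have "(\<Prod>x\<in>T. \<Prod>y\<in>S. x - y) = (\<Prod>y\<in>S. \<Prod>x\<in>T. - (y - x))"
    by (subst prod.swap) simp
  also have "\<dots> = (\<Prod>y\<in>S. (-1) ^ card T * (\<Prod>x\<in>T. y - x))"
    by (simp only: prod_uminus)
  also have "\<dots> = ((-1) ^ card T) ^ card S * (\<Prod>y\<in>S. \<Prod>x\<in>T. y - x)"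
    by (simp add: prod.distrib)
  finally show ?thesis by (simp only: power_mult[symmetric] mult.commute[of "card T"])
qed

lemma prod_Un_Diff_left:
  assumes "finite S" "finite T" "S \<inter> T = {}" "x \<in> S"
  shows "(\<Prod>y\<in>(S \<union> T) - {x}. f y) = (\<Prod>y\<in>S - {x}. f y) * (\<Prod>y\<in>T. f y)"
proof -
  have "(S \<union> T) - {x} = (S - {x}) \<union> T" "(S - {x}) \<inter> T = {}" using assms(3,4) by auto
  then show ?thesis using assms(1,2) by (simp add: prod.union_disjoint)
qed

lemma disc_set_union:
  fixes S T :: "'a::comm_ring_1 set"
  assumes "finite S" "finite T" "S \<inter> T = {}"
  shows "disc_set (S \<union> T) = disc_set S * disc_set T * (\<Prod>x\<in>S. \<Prod>y\<in>T. x - y) ^ 2"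
proof -
  define Dp where "Dp A = (\<Prod>x\<in>A. \<Prod>y\<in>A - {x}. x - y)" for A :: "'a set"
  define R where "R = (\<Prod>x\<in>S. \<Prod>y\<in>T. x - y)"
  define s :: 'a where "s = (-1) ^ (card S * card T)"
  have "T \<inter> S = {}" using assms(3) by auto
  have "Dp (S \<union> T) = (\<Prod>x\<in>S. \<Prod>y\<in>(S \<union> T) - {x}. x - y) * (\<Prod>x\<in>T. \<Prod>y\<in>(T \<union> S) - {x}. x - y)"
    unfolding Dp_def Un_commute[of T S] using assms by (rule prod.union_disjoint)
  also have "\<dots> = (Dp S * R) * (Dp T * (\<Prod>x\<in>T. \<Prod>y\<in>S. x - y))"
    using assms \<open>T \<inter> S = {}\<close> by (simp add: Dp_def R_def prod_Un_Diff_left prod.distrib)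
  also have "(\<Prod>x\<in>T. \<Prod>y\<in>S. x - y) = s * R"
    unfolding s_def R_def by (rule prod_prod_diff_swap)
  also have "Dp S * R * (Dp T * (s * R)) = s * (Dp S * Dp T * R ^ 2)"
    by (simp add: power2_eq_square mult_ac)
  finally have Dp: "Dp (S \<union> T) = s * (Dp S * Dp T * R ^ 2)" .
  have "s * s = 1" by (simp add: s_def flip: power_add)
  then have ss: "s * (s * z) = z" for z by (metis mult.assoc mult_1)
  moreover have "disc_set A = (-1) ^ (card A choose 2) * Dp A" for A by (simp add: disc_set_def Dp_def)
  moreover have "card (S \<union> T) = card S + card T" using assms by (rule card_Un_disjoint)
  ultimately show ?thesis
    unfolding R_def[symmetric] by (simp add: Dp choose_two_add power_add s_def[symmetric] algebra_simps ss)
qed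

lemma disc_set_empty [simp]: "disc_set {} = 1"
  by (simp add: disc_set_def numeral_2_eq_2)

lemma disc_set_singleton [simp]: "disc_set {x} = 1"
  by (simp add: disc_set_def numeral_2_eq_2)

lemma disc_set_image:
  fixes \<beta> :: "nat \<Rightarrow> 'a::comm_ring_1"
  assumes "inj_on \<beta> {..<k}"
  shows "disc_set (\<beta> ` {..<k}) = (\<Prod>j<k. \<Prod>i<j. \<beta> i - \<beta> j) ^ 2"
  using assms
proof (induction k)
  case (Suc k)
  have inj: "inj_on \<beta> {..<k}" using Suc.prems by (rule inj_on_subset) auto
  have "\<beta> k \<notin> \<beta> ` {..<k}" using inj_on_image_mem_iff[OF Suc.prems, of k "{..<k}"] by auto
  then have "disc_set (\<beta> ` {..<k} \<union> {\<beta> k})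
      = disc_set (\<beta> ` {..<k}) * disc_set {\<beta> k} * (\<Prod>x\<in>\<beta> ` {..<k}. \<Prod>y\<in>{\<beta> k}. x - y) ^ 2"
    by (intro disc_set_union) auto
  also have "(\<Prod>x\<in>\<beta> ` {..<k}. \<Prod>y\<in>{\<beta> k}. x - y) = (\<Prod>i<k. \<beta> i - \<beta> k)"
    using inj by (simp add: prod.reindex)
  also have "\<beta> ` {..<k} \<union> {\<beta> k} = \<beta> ` {..<Suc k}" by (auto simp: lessThan_Suc)
  finally show ?case using Suc.IH[OF inj] by (simp add: power_mult_distrib)
qed simp

lemma prod_pairs_diff_rotate:
  fixes \<beta> :: "nat \<Rightarrow> 'a::comm_ring_1"
  assumes "\<beta> (Suc m) = \<beta> 0"
  shows "(\<Prod>j<Suc m. \<Prod>i<j. \<beta> (Suc i) - \<beta> (Suc j)) = (-1) ^ m * (\<Prod>j<Suc m. \<Prod>i<j. \<beta> i - \<beta> j)"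
proof -
  define A where "A = (\<Prod>j<m. \<Prod>i<j. \<beta> (Suc i) - \<beta> (Suc j))"
  have "(\<Prod>j<Suc m. \<Prod>i<j. \<beta> (Suc i) - \<beta> (Suc j)) = A * (\<Prod>i<m. \<beta> (Suc i) - \<beta> 0)"
    by (simp add: A_def assms)
  also have "\<dots> = (-1) ^ m * (A * (\<Prod>i<m. \<beta> 0 - \<beta> (Suc i)))"
    using prod_uminus[of "\<lambda>i. \<beta> 0 - \<beta> (Suc i)" "{..<m}"] by (simp add: mult.left_commute)
  also have "A * (\<Prod>i<m. \<beta> 0 - \<beta> (Suc i)) = (\<Prod>j<m. \<Prod>i<Suc j. \<beta> i - \<beta> (Suc j))"
    by (simp only: prod.lessThan_Suc_shift prod.distrib A_def mult.commute)
  also have "\<dots> = (\<Prod>j<Suc m. \<Prod>i<j. \<beta> i - \<beta> j)"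
    by (subst (2) prod.lessThan_Suc_shift) simp
  finally show ?thesis .
qed

section \<open>Stickelberger's theorem\<close>

definition frob_closed :: "'a::finite_field alg_closure set \<Rightarrow> bool" where
  "frob_closed S \<longleftrightarrow> (\<forall>x\<in>S. x ^ CARD('a) \<in> S)"

lemma frob_closed_bij:
  fixes S :: "'a::finite_field alg_closure set"
  assumes "finite S" "frob_closed S"
  shows "bij_betw (\<lambda>x. x ^ CARD('a)) S S"
proof -
  have inj: "inj_on (\<lambda>x. x ^ CARD('a)) S" by (auto intro!: inj_onI simp: frobenius_eq_iff)
  then have "(\<lambda>x. x ^ CARD('a)) ` S = S"
    using endo_inj_surj[OF assms(1) _ inj] assms(2) by (auto simp: frob_closed_def)
  then show ?thesis using inj by (simp add: bij_betw_def)
qed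

lemma frob_closed_ac_roots: "frob_closed (ac_roots (f :: 'a::finite_field poly))"
  by (auto simp: frob_closed_def ac_roots_def poly_to_ac_power_card)

lemma prod_frob_closed_fixed:
  fixes S :: "'a::finite_field alg_closure set" and f :: "'a alg_closure \<Rightarrow> 'a alg_closure"
  assumes "finite S" "frob_closed S" "\<And>x. x \<in> S \<Longrightarrow> f x ^ CARD('a) = f (x ^ CARD('a))"
  shows "(\<Prod>x\<in>S. f x) ^ CARD('a) = (\<Prod>x\<in>S. f x)"
proof -
  have "(\<Prod>x\<in>S. f x) ^ CARD('a) = (\<Prod>x\<in>S. f x ^ CARD('a))"
    by (rule prod_power_distrib)
  also have "\<dots> = (\<Prod>x\<in>S. f (x ^ CARD('a)))"
    using assms(3) by (rule prod.cong[OF refl])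
  also have "\<dots> = (\<Prod>x\<in>S. f x)"
    by (rule prod.reindex_bij_betw[OF frob_closed_bij[OF assms(1,2)]])
  finally show ?thesis .
qed

lemma disc_set_power_union:
  fixes S T :: "'a::finite_field alg_closure set"
  assumes "odd CARD('a)" "finite S" "finite T" "S \<inter> T = {}" "frob_closed S" "frob_closed T"
  defines "h \<equiv> (CARD('a) - 1) div 2"
  shows "disc_set (S \<union> T) ^ h = disc_set S ^ h * disc_set T ^ h"
proof -
  define R where "R = (\<Prod>x\<in>S. \<Prod>y\<in>T. x - y)"
  have "(\<Prod>y\<in>T. x - y) ^ CARD('a) = (\<Prod>y\<in>T. x ^ CARD('a) - y)" for x
  proof -
    have "(\<Prod>y\<in>T. x - y) ^ CARD('a) = (\<Prod>y\<in>T. x ^ CARD('a) - y ^ CARD('a))"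
      by (simp add: prod_power_distrib frob.base.hom_minus)
    also have "\<dots> = (\<Prod>y\<in>T. x ^ CARD('a) - y)"
      by (rule prod.reindex_bij_betw[OF frob_closed_bij[OF assms(3,6)]])
    finally show ?thesis .
  qed
  then have "R ^ CARD('a) = R" unfolding R_def using assms(2,5) by (intro prod_frob_closed_fixed)
  moreover have "R \<noteq> 0" unfolding R_def using assms(2-4) by (auto simp: prod_zero_iff)
  ultimately have "(R ^ 2) ^ h = 1"
    using frobenius_fixed_power_card_minus_one
    unfolding h_def power_mult[symmetric] double_half_card_minus_one[OF assms(1)] by blast
  then show ?thesis using disc_set_union[OF assms(2-4)] by (simp add: R_def power_mult_distrib)
qed

lemma degree_eq_if_dvd_irreducible:
  fixes g h :: "'a::field poly"
  assumes "irreducible g" "h dvd g" "0 < degree h"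
  shows "degree g = degree h"
proof -
  obtain w where gw: "g = h * w" using assms(2) by (elim dvdE)
  then have "h \<noteq> 0" "w \<noteq> 0" using assms(1) by auto
  then have "\<not> is_unit h" using assms(3) by (simp add: is_unit_iff_degree)
  then have "is_unit w" using Factorial_Ring.irreducibleD[OF assms(1) gw] by blast
  then have "degree w = 0" using \<open>w \<noteq> 0\<close> by (simp add: is_unit_iff_degree)
  then show ?thesis using gw \<open>h \<noteq> 0\<close> \<open>w \<noteq> 0\<close> by (simp add: degree_mult_eq)
qed

lemma frob_orbit:
  fixes \<alpha> :: "'a::finite_field alg_closure"
  assumes "finite S" "frob_closed S" "\<alpha> \<in> S"
  obtains k where "0 < k" "\<alpha> ^ (CARD('a) ^ k) = \<alpha>" "inj_on (\<lambda>i. \<alpha> ^ (CARD('a) ^ i)) {..<k}"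
proof -
  define \<beta> where "\<beta> i = \<alpha> ^ (CARD('a) ^ i)" for i
  have \<beta>_shift: "\<beta> (j - i) = \<alpha>" if "i \<le> j" "\<beta> i = \<beta> j" for i j
  proof -
    have "\<beta> (j - i) ^ (CARD('a) ^ i) = \<beta> j"
      unfolding \<beta>_def power_mult[symmetric] power_add[symmetric] using that(1) by simp
    also have "\<dots> = \<alpha> ^ (CARD('a) ^ i)" using that(2) by (simp add: \<beta>_def)
    finally show ?thesis by (simp only: frobenius_iter_eq_iff)
  qed
  have \<beta>_Suc: "\<beta> (Suc i) = \<beta> i ^ CARD('a)" for i
    unfolding \<beta>_def by (simp only: power_Suc2 power_mult)
  have \<beta>_in_S: "\<beta> i \<in> S" for i
    using assms(2,3) by (induction i) (simp_all add: \<beta>_Suc frob_closed_def, simp add: \<beta>_def)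
  have "\<not> inj_on \<beta> {..card S}"
  proof
    assume "inj_on \<beta> {..card S}"
    then have "card (\<beta> ` {..card S}) = Suc (card S)" by (simp add: card_image)
    moreover have "card (\<beta> ` {..card S}) \<le> card S" using \<beta>_in_S by (intro card_mono[OF assms(1)]) auto
    ultimately show False by simp
  qed
  then obtain i j where "i \<noteq> j" "\<beta> i = \<beta> j" by (auto simp: inj_on_def)
  then have "\<exists>k. 0 < k \<and> \<beta> k = \<alpha>" using \<beta>_shift[of i j] \<beta>_shift[of j i]
    by (cases "i < j") (auto intro: exI[of _ "j - i"] exI[of _ "i - j"])
  define k where "k = (LEAST k. 0 < k \<and> \<beta> k = \<alpha>)"
  have k: "0 < k" "\<beta> k = \<alpha>" using LeastI_ex[OF \<open>\<exists>k. 0 < k \<and> \<beta> k = \<alpha>\<close>] by (simp_all add: k_def)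
  have "i = j" if "j < k" "i \<le> j" "\<beta> i = \<beta> j" for i j
  proof (rule ccontr)
    assume "i \<noteq> j"
    then have "0 < j - i" "j - i < k" using that by auto
    then show False using not_less_Least[of "j - i" "\<lambda>k. 0 < k \<and> \<beta> k = \<alpha>"] \<beta>_shift[OF that(2,3)]
      by (simp add: k_def)
  qed
  then have "inj_on \<beta> {..<k}" by (intro inj_onI) (metis lessThan_iff nat_le_linear)
  then show ?thesis using that[of k] k unfolding \<beta>_def[abs_def] by blast
qed

lemma frob_closed_orbit:
  fixes \<alpha> :: "'a::finite_field alg_closure"
  assumes "\<alpha> ^ (CARD('a) ^ k) = \<alpha>"
  shows "frob_closed ((\<lambda>i. \<alpha> ^ (CARD('a) ^ i)) ` {..<k})"
  unfolding frob_closed_def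
proof
  fix x assume "x \<in> (\<lambda>i. \<alpha> ^ (CARD('a) ^ i)) ` {..<k}"
  then obtain i where "i < k" "x = \<alpha> ^ (CARD('a) ^ i)" by auto
  then have "x ^ CARD('a) = \<alpha> ^ (CARD('a) ^ Suc i)" by (simp only: power_Suc2 power_mult)
  then show "x ^ CARD('a) \<in> (\<lambda>i. \<alpha> ^ (CARD('a) ^ i)) ` {..<k}"
    using assms \<open>i < k\<close> by (cases "Suc i = k") (auto intro: image_eqI[of _ _ 0] image_eqI[of _ _ "Suc i"])
qed

lemma frob_closed_prod_in_range:
  fixes T :: "'a::finite_field alg_closure set"
  assumes "finite T" "frob_closed T"
  obtains h :: "'a poly" where "map_poly to_ac h = (\<Prod>x\<in>T. [:-x, 1:])"
proof -
  define H where "H = (\<Prod>x\<in>T. [:-x, 1:])"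
  have "map_poly (\<lambda>x. x ^ CARD('a)) H = (\<Prod>x\<in>T. [:-(x ^ CARD('a)), 1:])"
    unfolding H_def by (simp add: frob.hom_prod frob.base.hom_uminus)
  also have "\<dots> = H" unfolding H_def
    by (rule prod.reindex_bij_betw[OF frob_closed_bij[OF assms], of "\<lambda>x. [:-x, 1:]"])
  finally have "coeff H i ^ CARD('a) = coeff H i" for i
    by (metis coeff_map_poly zero_power zero_less_card_finite)
  then have "coeff H i \<in> range to_ac" for i by (rule frobenius_fixed_imp_in_range)
  then have "map_poly to_ac (map_poly of_ac H) = H"
    by (intro poly_eqI) (simp add: coeff_map_poly to_ac_of_ac)
  then show ?thesis using that H_def by blast
qed

lemma ac_roots_irreducible:
  fixes g :: "'a::finite_field poly"
  assumes "irreducible g" "simple_roots (map_poly to_ac g)" "\<alpha> \<in> ac_roots g"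
  defines "\<beta> \<equiv> \<lambda>i. \<alpha> ^ (CARD('a) ^ i)"
  shows "ac_roots g = \<beta> ` {..<degree g}" "inj_on \<beta> {..<degree g}" "\<beta> (degree g) = \<alpha>"
proof -
  have "g \<noteq> 0" using assms(1) by auto
  have fin: "finite (ac_roots g)" using \<open>g \<noteq> 0\<close> by (rule finite_ac_roots)
  obtain k where k: "0 < k" "\<beta> k = \<alpha>" "inj_on \<beta> {..<k}"
    using frob_orbit[OF fin frob_closed_ac_roots assms(3)] unfolding \<beta>_def by blast
  have \<beta>_Suc: "\<beta> (Suc i) = \<beta> i ^ CARD('a)" for i
    unfolding \<beta>_def by (simp only: power_Suc2 power_mult)
  define Orb where "Orb = \<beta> ` {..<k}"
  have "finite Orb" "card Orb = k" using k(3) by (simp_all add: Orb_def card_image)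
  have "frob_closed Orb" using k(2) unfolding Orb_def \<beta>_def by (rule frob_closed_orbit)
  have "\<beta> i \<in> ac_roots g" for i
    using frob_closed_ac_roots[of g] assms(3)
    by (induction i) (simp_all add: \<beta>_Suc frob_closed_def, simp add: \<beta>_def)
  then have Orb_sub: "Orb \<subseteq> ac_roots g" by (auto simp: Orb_def)
  obtain h where h: "map_poly to_ac h = (\<Prod>x\<in>Orb. [:-x, 1:])"
    using frob_closed_prod_in_range[OF \<open>finite Orb\<close> \<open>frob_closed Orb\<close>] .
  have "(\<Prod>x\<in>ac_roots g. [:-x, 1:]) = (\<Prod>x\<in>ac_roots g - Orb. [:-x, 1:]) * (\<Prod>x\<in>Orb. [:-x, 1:])"
    using Orb_sub fin by (rule prod.subset_diff)
  then have "map_poly to_ac h dvd map_poly to_ac g"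
    using simple_roots_split[OF assms(2)] h by (metis ac_roots_def dvd_smult dvd_triv_right)
  then have "h dvd g" by (rule to_ac_hom.dvd_map_poly_hom_imp_dvd)
  moreover have "degree h = k"
    using arg_cong[OF h, of degree] \<open>card Orb = k\<close> by (simp add: degree_prod_eq_sum_degree)
  ultimately have "degree g = k" using assms(1) k(1) by (metis degree_eq_if_dvd_irreducible)
  moreover have "card (ac_roots g) = degree g"
    using simple_roots_split[OF assms(2)] by (simp add: ac_roots_def)
  ultimately have "Orb = ac_roots g" using card_subset_eq[OF fin Orb_sub] \<open>card Orb = k\<close> by simp
  then show "ac_roots g = \<beta> ` {..<degree g}" "inj_on \<beta> {..<degree g}" "\<beta> (degree g) = \<alpha>"
    using k \<open>degree g = k\<close> by (simp_all add: Orb_def)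
qed

text \<open>On the roots $\beta_i = \alpha^{q^i}$ of an irreducible \<open>g\<close> the Frobenius is a cyclic shift,
  so it multiplies $\delta = \prod_{i<j} (\beta_i - \beta_j)$ by $(-1)^{\deg g - 1}$.\<close>

lemma disc_set_power_irreducible:
  fixes g :: "'a::finite_field poly"
  assumes "odd CARD('a)" "irreducible g" "simple_roots (map_poly to_ac g)"
  shows "disc_set (ac_roots g) ^ ((CARD('a) - 1) div 2) = (-1) ^ (degree g + 1)"
proof -
  have "g \<noteq> 0" "\<not> is_unit g" using assms(2) by auto
  then have "0 < degree (map_poly to_ac g)" by (simp add: is_unit_iff_degree)
  then obtain \<alpha> where "\<alpha> \<in> ac_roots g"
    using alg_closed_imp_poly_has_root[of "map_poly to_ac g"] by (auto simp: ac_roots_def)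
  define \<beta> where "\<beta> i = \<alpha> ^ (CARD('a) ^ i)" for i
  define \<delta> where "\<delta> = (\<Prod>j<degree g. \<Prod>i<j. \<beta> i - \<beta> j)"
  obtain m where m: "degree g = Suc m" using \<open>0 < degree (map_poly to_ac g)\<close> not0_implies_Suc by force
  have roots: "ac_roots g = \<beta> ` {..<degree g}" and inj: "inj_on \<beta> {..<degree g}"
    and cyclic: "\<beta> (degree g) = \<beta> 0"
    using ac_roots_irreducible[OF assms(2,3) \<open>\<alpha> \<in> ac_roots g\<close>] by (simp_all add: \<beta>_def[abs_def])
  have \<beta>_Suc: "\<beta> i ^ CARD('a) = \<beta> (Suc i)" for i
    unfolding \<beta>_def by (simp only: power_Suc2 power_mult)
  have "\<delta> ^ CARD('a) = (\<Prod>j<Suc m. \<Prod>i<j. \<beta> (Suc i) - \<beta> (Suc j))"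
    unfolding \<delta>_def m prod_power_distrib by (simp only: frob.base.hom_minus \<beta>_Suc)
  also have "\<dots> = (-1) ^ m * \<delta>"
    unfolding \<delta>_def m using cyclic m by (intro prod_pairs_diff_rotate) simp
  finally have "\<delta> ^ (CARD('a) - 1) * \<delta> = (-1) ^ m * \<delta>"
    using card_finite_field_ge_2[where ?'a = 'a] by (simp flip: power_Suc2)
  moreover have "\<delta> \<noteq> 0" unfolding \<delta>_def using inj by (auto simp: inj_on_def)
  ultimately have \<delta>_power: "\<delta> ^ (CARD('a) - 1) = (-1) ^ m" by simp
  have "disc_set (ac_roots g) = \<delta> ^ 2" unfolding roots \<delta>_def using inj by (rule disc_set_image)
  then have "disc_set (ac_roots g) ^ ((CARD('a) - 1) div 2) = \<delta> ^ (2 * ((CARD('a) - 1) div 2))"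
    by (simp add: power_mult)
  also have "\<dots> = (-1) ^ m" by (simp only: double_half_card_minus_one[OF assms(1)] \<delta>_power)
  finally show ?thesis by (simp add: m)
qed

lemma simple_roots_mult_factors:
  assumes "simple_roots (map_poly to_ac (g * f))"
  shows "simple_roots (map_poly to_ac g)" "simple_roots (map_poly to_ac f)"
  using simple_roots_dvd[OF assms[unfolded to_ac_poly_hom.hom_mult] dvd_triv_left]
    simple_roots_dvd[OF assms[unfolded to_ac_poly_hom.hom_mult] dvd_triv_right] .

lemma disc_set_power_mult:
  fixes g f :: "'a::finite_field poly"
  assumes "odd CARD('a)" "simple_roots (map_poly to_ac (g * f))"
  defines "h \<equiv> (CARD('a) - 1) div 2"
  shows "disc_set (ac_roots (g * f)) ^ h = disc_set (ac_roots g) ^ h * disc_set (ac_roots f) ^ h"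
proof -
  have "g \<noteq> 0" "f \<noteq> 0" using simple_roots_nonzero[OF assms(2)] by auto
  have disjoint: "ac_roots g \<inter> ac_roots f = {}"
    using assms(2) by (auto simp: ac_roots_def simple_roots_def to_ac_poly_hom.hom_mult pderiv_mult)
  have "ac_roots (g * f) = ac_roots g \<union> ac_roots f"
    by (auto simp: ac_roots_def to_ac_poly_hom.hom_mult)
  then show ?thesis unfolding h_def
    using disc_set_power_union[OF assms(1) finite_ac_roots[OF \<open>g \<noteq> 0\<close>] finite_ac_roots[OF \<open>f \<noteq> 0\<close>]
        disjoint frob_closed_ac_roots frob_closed_ac_roots] by simp
qed

theorem stickelberger:
  fixes f :: "'a::{finite_field, field_gcd} poly"
  assumes "odd CARD('a)" "simple_roots (map_poly to_ac f)"
  shows "disc_set (ac_roots f) ^ ((CARD('a) - 1) div 2) = (-1) ^ (degree f + card (prime_factors f))"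
  using assms(2)
proof (induction "degree f" arbitrary: f rule: less_induct)
  case (less f)
  have "f \<noteq> 0" using simple_roots_nonzero[OF less.prems] by auto
  show ?case
  proof (cases "is_unit f")
    case True
    then have "ac_roots f = {}" "degree f = 0" "prime_factors f = {}"
      using \<open>f \<noteq> 0\<close> by (auto simp: ac_roots_def is_unit_iff_degree prime_factorization_unit elim!: degree_eq_zeroE)
    then show ?thesis by simp
  next
    case False
    then obtain g where "g dvd f" "prime g" using prime_divisor_exists[OF \<open>f \<noteq> 0\<close>] by blast
    then obtain f' where f: "f = g * f'" by (elim dvdE)
    have "g \<noteq> 0" "f' \<noteq> 0" using f \<open>f \<noteq> 0\<close> by auto
    have "\<not> is_unit g" using prime_elem_not_unit[of g] \<open>prime g\<close> by (auto simp: prime_def)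
    then have deg: "degree f = degree g + degree f'" "0 < degree g"
      using f \<open>g \<noteq> 0\<close> \<open>f' \<noteq> 0\<close> is_unit_iff_degree[OF \<open>g \<noteq> 0\<close>] by (auto simp: degree_mult_eq)
    note simple = simple_roots_mult_factors[OF less.prems[unfolded f]]
    have "g \<notin> prime_factors f'"
    proof
      assume "g \<in> prime_factors f'"
      then have "g ^ 2 dvd f" unfolding f by (auto simp: power2_eq_square intro: mult_dvd_mono)
      then show False
        using simple_roots_imp_squarefree[OF less.prems] \<open>\<not> is_unit g\<close> by (auto simp: squarefree_def)
    qed
    then have card: "card (prime_factors f) = Suc (card (prime_factors f'))"
      using f \<open>g \<noteq> 0\<close> \<open>f' \<noteq> 0\<close> \<open>prime g\<close> by (simp add: prime_factors_product prime_factorization_prime)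
    have "disc_set (ac_roots f) ^ ((CARD('a) - 1) div 2)
        = disc_set (ac_roots g) ^ ((CARD('a) - 1) div 2) * disc_set (ac_roots f') ^ ((CARD('a) - 1) div 2)"
      unfolding f using assms(1) less.prems[unfolded f] by (rule disc_set_power_mult)
    also have "\<dots> = (-1) ^ (degree g + 1) * (-1) ^ (degree f' + card (prime_factors f'))"
      using disc_set_power_irreducible[OF assms(1) _ simple(1)] less.hyps[OF _ simple(2)] deg \<open>prime g\<close>
      by (simp add: prime_elem_imp_irreducible)
    finally show ?thesis using deg card by (simp add: power_add)
  qed
qed

lemma disc_set_ac_roots_pderiv_square:
  fixes F G :: "'a::finite_field poly"
  assumes "simple_roots (map_poly to_ac F)" "pderiv F = smult b (G ^ 2)"
  obtains P where "P ^ (CARD('a) - 1) = 1"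
    "disc_set (ac_roots F) = (-1) ^ (degree F choose 2) * to_ac (b / lead_coeff F) ^ degree F * P ^ 2"
proof
  define S where "S = ac_roots F"
  define P where "P = (\<Prod>x\<in>S. poly (map_poly to_ac G) x)"
  have "F \<noteq> 0" using simple_roots_nonzero[OF assms(1)] by auto
  have "finite S" unfolding S_def using \<open>F \<noteq> 0\<close> by (rule finite_ac_roots)
  have "card S = degree F" using simple_roots_split[OF assms(1)] by (simp add: S_def ac_roots_def)
  have pderiv_ac: "pderiv (map_poly to_ac F) = smult (to_ac b) (map_poly to_ac G ^ 2)"
    by (simp add: assms(2) flip: to_ac_hom.map_poly_pderiv to_ac_hom.map_poly_hom_smult to_ac_poly_hom.hom_power)
  have "(\<Prod>x\<in>S. poly (pderiv (map_poly to_ac F)) x)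
      = to_ac (lead_coeff F) ^ degree F * (\<Prod>x\<in>S. \<Prod>y\<in>S - {x}. x - y)"
    using prod_pderiv_roots[OF assms(1)] by (simp add: S_def ac_roots_def)
  also have "(\<Prod>x\<in>S. poly (pderiv (map_poly to_ac F)) x) = to_ac b ^ degree F * P ^ 2"
    using \<open>card S = degree F\<close> by (simp add: pderiv_ac P_def prod.distrib power_mult_distrib prod_power_distrib)
  finally show "disc_set (ac_roots F)
      = (-1) ^ (degree F choose 2) * to_ac (b / lead_coeff F) ^ degree F * P ^ 2"
    using \<open>F \<noteq> 0\<close> \<open>card S = degree F\<close> by (simp add: S_def disc_set_def field_simps power_divide)
  have "P \<noteq> 0"
    using assms(1) \<open>finite S\<close> by (auto simp: P_def S_def ac_roots_def simple_roots_def pderiv_ac)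
  moreover have "P ^ CARD('a) = P"
    unfolding P_def using \<open>finite S\<close> frob_closed_ac_roots
    by (intro prod_frob_closed_fixed) (simp_all add: S_def poly_to_ac_power_card)
  ultimately show "P ^ (CARD('a) - 1) = 1" by (rule frobenius_fixed_power_card_minus_one[rotated])
qed

section \<open>Signs and the quadratic character\<close>

lemma square_one_power_parity:
  fixes x :: "'a::monoid_mult"
  assumes "x ^ 2 = 1" "even m \<longleftrightarrow> even n"
  shows "x ^ m = x ^ n"
proof -
  have "x ^ k = x ^ (k mod 2)" for k
  proof -
    have "x ^ k = (x ^ 2) ^ (k div 2) * x ^ (k mod 2)"
      by (simp flip: power_mult power_add)
    then show ?thesis using assms(1) by simp
  qed
  moreover have "m mod 2 = n mod 2" using assms(2) by (simp add: mod2_eq_if)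
  ultimately show ?thesis by metis
qed

lemma even_choose_two_double:
  assumes "e \<le> 1"
  shows "even ((2 * k + e) choose 2) \<longleftrightarrow> even k"
proof -
  have "e choose 2 = 0" using assms by (simp add: binomial_eq_0)
  then have "(2 * k + e) choose 2 = ((2 * k) choose 2) + 2 * (k * e)"
    using choose_two_add[of "2 * k" e] by simp
  also have "(2 * k) choose 2 = 2 * (k choose 2) + k * k"
    using choose_two_add[of k k] by (simp only: mult_2)
  finally show ?thesis by simp
qed

lemma square_one_power_choose_two:
  fixes x :: "'a::monoid_mult"
  assumes "x ^ 2 = 1" "odd p" "e \<le> 1"
  shows "x ^ ((2 * (p * d) + e) choose 2) = x ^ d"
  using assms even_choose_two_double[OF assms(3), of "p * d"] by (intro square_one_power_parity) auto

lemma of_int_eq_iff_square_one: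
  fixes x y :: int
  assumes "CHAR('a::idom) \<noteq> 2" "x ^ 2 = 1" "y ^ 2 = 1"
  shows "(of_int x :: 'a) = of_int y \<longleftrightarrow> x = y"
proof
  assume eq: "(of_int x :: 'a) = of_int y"
  show "x = y"
  proof (rule ccontr)
    assume "x \<noteq> y"
    then have "(1 :: 'a) = -1" using eq assms(2,3) by (auto simp: power2_eq_1_iff)
    then have "of_nat 2 = (0 :: 'a)" by (simp add: eq_neg_iff_add_eq_0)
    then have "CHAR('a) dvd 2" by (simp only: of_nat_eq_0_iff_char_dvd)
    then have "CHAR('a) \<le> 2" "CHAR('a) \<noteq> 0" by (auto dest: dvd_imp_le intro: gr0I)
    then show False using assms(1) CHAR_not_1'[where ?'a = 'a] by linarith
  qed
qed simp

lemma quad_char_square_one: "x \<noteq> 0 \<Longrightarrow> quad_char x ^ 2 = 1"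
  by (simp add: quad_char_def)

lemma quad_char_square: "y \<noteq> 0 \<Longrightarrow> quad_char (y ^ 2) = 1"
  by (auto simp: quad_char_def)

theorem stickelberger_pderiv_square:
  fixes F G :: "'a::{finite_field, field_gcd} poly"
  assumes "CHAR('a) \<noteq> 2" "b \<noteq> 0" "simple_roots (map_poly to_ac F)" "pderiv F = smult b (G ^ 2)"
  defines "n \<equiv> degree F"
  shows "(-1) ^ (n + card (prime_factors F)) = quad_char (b / lead_coeff F) ^ n * quad_char (-1 :: 'a) ^ (n choose 2)"
proof -
  have odd: "odd CARD('a)" using assms(1) by (rule odd_card_finite_field)
  define h where "h = (CARD('a) - 1) div 2"
  have "F \<noteq> 0" using simple_roots_nonzero[OF assms(3)] by auto
  obtain P where P: "P ^ (2 * h) = 1"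
    and disc: "disc_set (ac_roots F) = (-1) ^ (n choose 2) * to_ac (b / lead_coeff F) ^ n * P ^ 2"
    using disc_set_ac_roots_pderiv_square[OF assms(3,4)] unfolding h_def double_half_card_minus_one[OF odd] n_def .
  have "(-1 :: 'a) ^ h = of_int (quad_char (-1 :: 'a))"
    unfolding h_def using assms(1) by (intro euler_criterion) simp_all
  then have "to_ac ((-1 :: 'a) ^ h) = to_ac (of_int (quad_char (-1 :: 'a)))" by (rule arg_cong)
  then have minus_one: "(-1 :: 'a alg_closure) ^ h = to_ac (of_int (quad_char (-1 :: 'a)))"
    by simp
  have quotient: "(b / lead_coeff F) ^ h = of_int (quad_char (b / lead_coeff F))"
    unfolding h_def using assms(1,2) \<open>F \<noteq> 0\<close> by (intro euler_criterion) simp_all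
  have "disc_set (ac_roots F) ^ h = ((-1) ^ h) ^ (n choose 2) * to_ac ((b / lead_coeff F) ^ h) ^ n * P ^ (2 * h)"
    unfolding disc power_mult_distrib to_ac_power by (simp only: power_mult[symmetric] mult_ac)
  then have "disc_set (ac_roots F) ^ h
      = to_ac (of_int (quad_char (b / lead_coeff F) ^ n * quad_char (-1 :: 'a) ^ (n choose 2)))"
    unfolding minus_one quotient P by (simp add: mult.commute)
  moreover have "disc_set (ac_roots F) ^ h = to_ac (of_int ((-1) ^ (n + card (prime_factors F))))"
    using stickelberger[OF odd assms(3)] by (simp add: h_def n_def)
  ultimately have "(of_int ((-1) ^ (n + card (prime_factors F))) :: 'a)
      = of_int (quad_char (b / lead_coeff F) ^ n * quad_char (-1 :: 'a) ^ (n choose 2))"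
    by (simp only: to_ac_eq_iff)
  moreover have "((-1 :: int) ^ (n + card (prime_factors F))) ^ 2 = 1"
    by (simp flip: power_mult)
  moreover have "(quad_char (b / lead_coeff F) ^ n * quad_char (-1 :: 'a) ^ (n choose 2)) ^ 2 = 1"
    using assms(2) \<open>F \<noteq> 0\<close> quad_char_square_one[of "b / lead_coeff F"] quad_char_square_one[of "-1 :: 'a"]
    by (simp add: power_mult_distrib power_mult[symmetric] mult.commute[of _ 2] power_mult)
  ultimately show ?thesis using of_int_eq_iff_square_one[OF assms(1)] by blast
qed

section \<open>The polynomial $a g_1^{2p} + b u g_2^{2p}$\<close>

lemma pderiv_power_CHAR_multiple: "pderiv (p ^ (k * CHAR('a))) = (0 :: 'a::idom poly)"
  by (simp add: pderiv_power)

lemma pderiv_pth_power_combination: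
  fixes g1 g2 :: "'a::idom poly"
  shows "pderiv (smult a (g1 ^ (2 * CHAR('a))) + smult b ([:0, 1:] * g2 ^ (2 * CHAR('a))))
    = smult b ((g2 ^ CHAR('a)) ^ 2)"
proof -
  have "pderiv (smult a (g1 ^ (2 * CHAR('a))) + smult b ([:0, 1:] * g2 ^ (2 * CHAR('a))))
      = smult b (g2 ^ (2 * CHAR('a)))"
    by (simp add: pderiv_add pderiv_smult pderiv_mult pderiv_pCons pderiv_power_CHAR_multiple)
  also have "\<dots> = smult b ((g2 ^ CHAR('a)) ^ 2)" by (simp flip: power_mult add: mult.commute)
  finally show ?thesis .
qed

lemma simple_roots_pth_power_combination:
  fixes g1 g2 :: "'a::{field_prime_char, field_gcd} poly"
  assumes "a \<noteq> 0" "b \<noteq> 0" "coprime g1 g2"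
  shows "simple_roots (map_poly to_ac (smult a (g1 ^ (2 * CHAR('a))) + smult b ([:0, 1:] * g2 ^ (2 * CHAR('a)))))"
    (is "simple_roots (map_poly to_ac ?F)")
  unfolding simple_roots_def
proof (intro allI impI notI)
  fix x
  assume F_x: "poly (map_poly to_ac ?F) x = 0" and F'_x: "poly (pderiv (map_poly to_ac ?F)) x = 0"
  obtain u v where "u * g1 + v * g2 = 1"
    using assms(3) bezout_coefficients_fst_snd[of g1 g2] by (metis coprime_iff_gcd_eq_1)
  then have "map_poly to_ac u * map_poly to_ac g1 + map_poly to_ac v * map_poly to_ac g2 = 1"
    by (metis to_ac_poly_hom.hom_add to_ac_poly_hom.hom_mult to_ac_poly_hom.hom_one)
  then have bezout: "poly (map_poly to_ac u) x * poly (map_poly to_ac g1) x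
      + poly (map_poly to_ac v) x * poly (map_poly to_ac g2) x = 1"
    by (metis poly_1 poly_add poly_mult)
  have "poly (map_poly to_ac (pderiv ?F)) x = 0" using F'_x by (simp add: to_ac_hom.map_poly_pderiv)
  then have "poly (map_poly to_ac (smult b ((g2 ^ CHAR('a)) ^ 2))) x = 0"
    by (simp only: pderiv_pth_power_combination)
  then have "poly (map_poly to_ac g2) x = 0"
    using assms(2) by (simp add: to_ac_hom.map_poly_hom_smult to_ac_poly_hom.hom_power)
  moreover from this have "poly (map_poly to_ac g1) x = 0"
    using F_x assms(1) by (simp add: zero_power to_ac_poly_hom.hom_add to_ac_hom.map_poly_hom_smult to_ac_poly_hom.hom_mult
        to_ac_poly_hom.hom_power to_ac_hom.map_poly_pCons_hom)
  ultimately show False using bezout by simp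
qed

lemma degree_lead_coeff_X_term_dominant:
  fixes g1 g2 :: "'a::field poly" and a b :: 'a and m :: nat
  assumes "b \<noteq> 0" "g2 \<noteq> 0" "g1 = 0 \<or> degree g1 \<le> degree g2"
  defines "F \<equiv> smult a (g1 ^ (2 * m)) + smult b ([:0, 1:] * g2 ^ (2 * m))"
  shows "degree F = 2 * (m * degree g2) + 1" "lead_coeff F = b * lead_coeff g2 ^ (2 * m)"
proof -
  define B where "B = smult b ([:0, 1:] * g2 ^ (2 * m))"
  have "degree B = 2 * (m * degree g2) + 1"
    using assms(1,2) by (simp add: B_def degree_mult_eq degree_power_eq)
  moreover have "degree (smult a (g1 ^ (2 * m))) \<le> 2 * (m * degree g2)"
  proof -
    have "degree g1 \<le> degree g2" using assms(3) by auto
    then have "degree g1 * (2 * m) \<le> 2 * (m * degree g2)" by (simp add: mult_le_mono1 algebra_simps)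
    then show ?thesis using degree_smult_le[of a "g1 ^ (2 * m)"] degree_power_le[of g1 "2 * m"] by linarith
  qed
  ultimately have "degree (smult a (g1 ^ (2 * m))) < degree B" by linarith
  then have "degree F = degree B" "lead_coeff F = lead_coeff B"
    unfolding F_def B_def[symmetric] by (rule degree_add_eq_right, rule lead_coeff_add_le)
  moreover have "lead_coeff B = b * lead_coeff g2 ^ (2 * m)"
    by (simp only: B_def lead_coeff_smult lead_coeff_mult lead_coeff_power) simp
  ultimately show "degree F = 2 * (m * degree g2) + 1" "lead_coeff F = b * lead_coeff g2 ^ (2 * m)"
    using \<open>degree B = _\<close> by simp_all
qed

lemma degree_lead_coeff_X_term_dominated:
  fixes g1 g2 :: "'a::field poly" and a b :: 'a and m :: nat
  assumes "a \<noteq> 0" "0 < m" "g1 \<noteq> 0" "g2 = 0 \<or> degree g2 < degree g1"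
  defines "F \<equiv> smult a (g1 ^ (2 * m)) + smult b ([:0, 1:] * g2 ^ (2 * m))"
  shows "degree F = 2 * (m * degree g1)" "lead_coeff F = a * lead_coeff g1 ^ (2 * m)"
proof -
  define A where "A = smult a (g1 ^ (2 * m))"
  define B where "B = smult b ([:0, 1:] * g2 ^ (2 * m))"
  have "degree A = 2 * (m * degree g1)"
    using assms(1,3) by (simp add: A_def degree_power_eq)
  have "lead_coeff A = a * lead_coeff g1 ^ (2 * m)"
    by (simp add: A_def lead_coeff_power)
  have "degree B < degree A \<or> B = 0"
  proof (cases "g2 = 0 \<or> b = 0")
    case False
    then have "degree B = 2 * (m * degree g2) + 1"
      by (simp add: B_def degree_mult_eq degree_power_eq)
    moreover have "2 * m * Suc (degree g2) \<le> 2 * m * degree g1"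
      using assms(4) False by (intro mult_le_mono2) auto
    ultimately show ?thesis using assms(2) \<open>degree A = _\<close> by (simp add: algebra_simps)
  qed (use assms(2) in \<open>auto simp: B_def\<close>)
  then have "degree (B + A) = degree A \<and> lead_coeff (B + A) = lead_coeff A"
    using degree_add_eq_right[of B A] lead_coeff_add_le[of B A] by auto
  moreover have "F = B + A" unfolding F_def A_def B_def by (rule add.commute)
  ultimately show "degree F = 2 * (m * degree g1)" "lead_coeff F = a * lead_coeff g1 ^ (2 * m)"
    using \<open>degree A = _\<close> \<open>lead_coeff A = _\<close> by metis+
qed

lemma poly_mobius_pth_power_combination:
  fixes a b :: "'a::{finite_field, field_gcd}" and g1 g2 :: "'a poly"
  assumes "CHAR('a) \<noteq> 2" "a \<noteq> 0" "b \<noteq> 0" "coprime g1 g2"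
  defines "F \<equiv> smult a (g1 ^ (2 * CHAR('a))) + smult b ([:0, 1:] * g2 ^ (2 * CHAR('a)))"
  shows "poly_mobius F
    = (-1) ^ degree F * quad_char (b / lead_coeff F) ^ degree F * quad_char (-1 :: 'a) ^ (degree F choose 2)"
proof -
  have simple: "simple_roots (map_poly to_ac F)"
    unfolding F_def using assms(2-4) by (rule simple_roots_pth_power_combination)
  have "poly_mobius F = (-1) ^ degree F * (-1) ^ (degree F + card (prime_factors F))"
    using simple_roots_imp_squarefree[OF simple] by (simp add: poly_mobius_def power_add flip: mult.assoc)
  also have "\<dots> = (-1) ^ degree F * quad_char (b / lead_coeff F) ^ degree F
      * quad_char (-1 :: 'a) ^ (degree F choose 2)"
    using stickelberger_pderiv_square[OF assms(1,3) simple pderiv_pth_power_combination[of a g1 b g2, folded F_def]]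
    by (simp add: mult.assoc)
  finally show ?thesis .
qed

lemma poly_mobius_X_term_dominant:
  fixes a b :: "'a::{finite_field, field_gcd}" and g1 g2 :: "'a poly"
  assumes "CHAR('a) \<noteq> 2" "a \<noteq> 0" "b \<noteq> 0" "coprime g1 g2"
    and "g2 \<noteq> 0" "g1 = 0 \<or> degree g1 \<le> degree g2"
  shows "poly_mobius (smult a (g1 ^ (2 * CHAR('a))) + smult b ([:0, 1:] * g2 ^ (2 * CHAR('a))))
    = - (quad_char (-1 :: 'a) ^ degree g2)"
proof -
  define F where "F = smult a (g1 ^ (2 * CHAR('a))) + smult b ([:0, 1:] * g2 ^ (2 * CHAR('a)))"
  note F = degree_lead_coeff_X_term_dominant[OF assms(3,5,6), of a "CHAR('a)", folded F_def]
  have "b / lead_coeff F = (inverse (lead_coeff g2) ^ CHAR('a)) ^ 2"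
    using assms(3,5) by (simp add: F(2) field_simps power_mult_distrib flip: power_mult)
  then have "quad_char (b / lead_coeff F) = 1" using assms(5) by (simp add: quad_char_square)
  moreover have "quad_char (-1 :: 'a) ^ (degree F choose 2) = quad_char (-1 :: 'a) ^ degree g2"
    unfolding F(1) using odd_CHAR[OF assms(1)]
    by (intro square_one_power_choose_two) (simp_all add: quad_char_square_one)
  ultimately show ?thesis
    unfolding F_def[symmetric] using poly_mobius_pth_power_combination[OF assms(1-4), folded F_def] F(1) by simp
qed

lemma poly_mobius_X_term_dominated:
  fixes a b :: "'a::{finite_field, field_gcd}" and g1 g2 :: "'a poly"
  assumes "CHAR('a) \<noteq> 2" "a \<noteq> 0" "b \<noteq> 0" "coprime g1 g2"
    and "g1 \<noteq> 0" "g2 = 0 \<or> degree g2 < degree g1"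
  shows "poly_mobius (smult a (g1 ^ (2 * CHAR('a))) + smult b ([:0, 1:] * g2 ^ (2 * CHAR('a))))
    = quad_char (-1 :: 'a) ^ degree g1"
proof -
  define F where "F = smult a (g1 ^ (2 * CHAR('a))) + smult b ([:0, 1:] * g2 ^ (2 * CHAR('a)))"
  note F = degree_lead_coeff_X_term_dominated[OF assms(2) CHAR_pos[where ?'a = 'a] assms(5,6), of b, folded F_def]
  have "lead_coeff F \<noteq> 0" using F(2) assms(2,5) by simp
  then have "quad_char (b / lead_coeff F) ^ 2 = 1" using assms(3) by (simp add: quad_char_square_one)
  then have "quad_char (b / lead_coeff F) ^ degree F = 1" unfolding F(1) power_mult by simp
  moreover have "quad_char (-1 :: 'a) ^ (degree F choose 2) = quad_char (-1 :: 'a) ^ degree g1"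
    using square_one_power_choose_two[of "quad_char (-1 :: 'a)" "CHAR('a)" 0 "degree g1"] odd_CHAR[OF assms(1)]
    by (simp add: F(1) quad_char_square_one)
  ultimately show ?thesis
    unfolding F_def[symmetric] using poly_mobius_pth_power_combination[OF assms(1-4), folded F_def] F(1) by simp
qed

theorem lemma3p5:
  fixes a b :: "'a::{finite_field, field_gcd}" and g1 g2 :: "'a poly"
  assumes "CHAR('a) \<noteq> 2"
    and "a \<noteq> 0" and "b \<noteq> 0"
    and "coprime g1 g2" and "\<not> (g1 = 0 \<and> g2 = 0)"
  shows "poly_mobius (smult a (g1 ^ (2 * CHAR('a))) + smult b ([:0, 1:] * g2 ^ (2 * CHAR('a)))) =
    (if g2 \<noteq> 0 \<and> (g1 = 0 \<or> degree g1 \<le> degree g2)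
     then - ((quad_char (-1 :: 'a)) ^ degree g2)
     else (quad_char (-1 :: 'a)) ^ degree g1)"
proof (cases "g2 \<noteq> 0 \<and> (g1 = 0 \<or> degree g1 \<le> degree g2)")
  case True
  then show ?thesis using poly_mobius_X_term_dominant[OF assms(1-4)] by simp
next
  case False
  then have "g1 \<noteq> 0" "g2 = 0 \<or> degree g2 < degree g1" using assms(5) by auto
  then have "poly_mobius (smult a (g1 ^ (2 * CHAR('a))) + smult b ([:0, 1:] * g2 ^ (2 * CHAR('a))))
    = quad_char (-1 :: 'a) ^ degree g1" by (rule poly_mobius_X_term_dominated[OF assms(1-4)])
  with False show ?thesis by auto
qed

end
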